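(* Let $\epsilon>0$, $\delta\in(0,1)$, $x>0$, and let $\mathcal{R}$ consist of $M=\frac{48x}{\epsilon^2}\ln\frac{2n}{\delta}$ independently generated random RR sets. If $I_{max}\ge xn$, then with probability at least $1-\delta_1$, $\mathcal{F_R}^*\ge x-\epsilon$, where $\delta_1=\left(\frac{\delta}{2n}\right)^{24}$.
   Context: $G=\langle V,E,w\rangle$ is a network with $n=|V|$ under the Linear Threshold or Independent Cascade model (live-edge form: LT — each node $v$ independently selects at most one incoming live edge, $(u,v)$ with probability $w_{uv}/W_v$ where $W_v=w_v+\sum_u w_{uv}$ includes a self-weight $w_v$; IC — each edge $(u,v)$ live independently with probability $w_{uv}$). $I_u$ is the expected number of nodes reachable from $u$ via live edges and $I_{max}=\max_u I_u$. A random RR set is the set of nodes that can reach a uniformly random node $v\in V$ via live edges in a freshly sampled live-edge graph. $\mathcal{F_R}(u)$ is the fraction of RR sets in $\mathcal{R}$ containing $u$, and $\mathcal{F_R}^*=\max_{u\in V}\mathcal{F_R}(u)$. *)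

theory Defs
  imports "HOL-Probability.Probability"
begin

text \<open>Network: finite vertex set V, edge set E \<subseteq> V \<times> V, edge weights w u v
  (weight of edge (u,v)), self-weights ws v (used by the LT model).\<close>

definition ic_live :: "('v \<times> 'v) set \<Rightarrow> ('v \<Rightarrow> 'v \<Rightarrow> real) \<Rightarrow> ('v \<times> 'v) set pmf" where
  "ic_live E w = map_pmf (\<lambda>b. {e \<in> E. b e}) (Pi_pmf E False (\<lambda>(u, v). bernoulli_pmf (w u v)))"

definition lt_W :: "('v \<times> 'v) set \<Rightarrow> ('v \<Rightarrow> 'v \<Rightarrow> real) \<Rightarrow> ('v \<Rightarrow> real) \<Rightarrow> 'v \<Rightarrow> real" where
  "lt_W E w ws v = ws v + (\<Sum>u\<in>{u. (u, v) \<in> E}. w u v)"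

text \<open>Choice of node v: Some u = incoming live edge (u,v) with prob w u v / W v;
  None = no live incoming edge, with prob w_v / W v.\<close>
definition lt_choice :: "('v \<times> 'v) set \<Rightarrow> ('v \<Rightarrow> 'v \<Rightarrow> real) \<Rightarrow> ('v \<Rightarrow> real) \<Rightarrow> 'v \<Rightarrow> 'v option pmf" where
  "lt_choice E w ws v = embed_pmf (\<lambda>c. case c of
       None \<Rightarrow> ws v / lt_W E w ws v
     | Some u \<Rightarrow> (if (u, v) \<in> E then w u v / lt_W E w ws v else 0))"

definition lt_live :: "'v set \<Rightarrow> ('v \<times> 'v) set \<Rightarrow> ('v \<Rightarrow> 'v \<Rightarrow> real) \<Rightarrow> ('v \<Rightarrow> real) \<Rightarrow> ('v \<times> 'v) set pmf" where
  "lt_live V E w ws = map_pmf (\<lambda>c. {(u, v). v \<in> V \<and> c v = Some u}) (Pi_pmf V None (lt_choice E w ws))"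

definition live_edge_model ::
  "'v set \<Rightarrow> ('v \<times> 'v) set \<Rightarrow> ('v \<Rightarrow> 'v \<Rightarrow> real) \<Rightarrow> ('v \<Rightarrow> real) \<Rightarrow> ('v \<times> 'v) set pmf \<Rightarrow> bool" where
  "live_edge_model V E w ws G \<longleftrightarrow> finite V \<and> V \<noteq> {} \<and> E \<subseteq> V \<times> V \<and>
     (((\<forall>(u, v)\<in>E. 0 \<le> w u v \<and> w u v \<le> 1) \<and> G = ic_live E w) \<or>
      ((\<forall>(u, v)\<in>E. 0 \<le> w u v) \<and> (\<forall>v\<in>V. 0 \<le> ws v \<and> 0 < lt_W E w ws v) \<and> G = lt_live V E w ws))"

definition influence :: "'v set \<Rightarrow> ('v \<times> 'v) set pmf \<Rightarrow> 'v \<Rightarrow> real" where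
  "influence V G u = measure_pmf.expectation G (\<lambda>L. real (card {v \<in> V. (u, v) \<in> L\<^sup>*}))"

definition I_max :: "'v set \<Rightarrow> ('v \<times> 'v) set pmf \<Rightarrow> real" where
  "I_max V G = Max (influence V G ` V)"

definition rr_set :: "'v set \<Rightarrow> ('v \<times> 'v) set pmf \<Rightarrow> 'v set pmf" where
  "rr_set V G = bind_pmf (pmf_of_set V) (\<lambda>v. map_pmf (\<lambda>L. {u \<in> V. (u, v) \<in> L\<^sup>*}) G)"

definition rr_collection :: "'v set \<Rightarrow> ('v \<times> 'v) set pmf \<Rightarrow> nat \<Rightarrow> (nat \<Rightarrow> 'v set) pmf" where
  "rr_collection V G M = Pi_pmf {..<M} {} (\<lambda>_. rr_set V G)"

definition frac_cov :: "nat \<Rightarrow> (nat \<Rightarrow> 'v set) \<Rightarrow> 'v \<Rightarrow> real" where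
  "frac_cov M R u = real (card {i \<in> {..<M}. u \<in> R i}) / real M"

definition frac_star :: "'v set \<Rightarrow> nat \<Rightarrow> (nat \<Rightarrow> 'v set) \<Rightarrow> real" where
  "frac_star V M R = Max (frac_cov M R ` V)"

end

theory Submission
  imports Defs
begin

text \<open>Let \<open>u\<close> be a node of maximal influence. A random RR set contains \<open>u\<close> with probability
  \<open>p = I\<^sub>u / n \<ge> x\<close>, so the number of the \<open>M\<close> RR sets covering \<open>u\<close> is binomially distributed
  with parameters \<open>M\<close> and \<open>p\<close>. The multiplicative Chernoff bound bounds the probability that
  this count drops below \<open>(x - \<epsilon>) M\<close> by \<open>exp (- d\<^sup>2 M / (2 p))\<close> with \<open>d = p - x + \<epsilon>\<close>, and since
  \<open>d\<^sup>2 x \<ge> p \<epsilon>\<^sup>2\<close> the choice of \<open>M\<close> makes the exponent at least \<open>24 ln (2n/\<delta>)\<close>.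
  Finally \<open>F\<^sub>R\<^sup>* \<ge> F\<^sub>R(u)\<close>.\<close>

lemma exp_minus_le_quadratic:
  fixes t :: real
  assumes "t \<ge> 0"
  shows "exp (- t) \<le> 1 - t + t\<^sup>2 / 2"
proof -
  let ?f = "\<lambda>s::real. 1 - s + s\<^sup>2 / 2 - exp (- s)"
  have "?f 0 \<le> ?f t"
  proof (rule DERIV_nonneg_imp_nondecreasing[OF assms])
    fix s :: real
    have "DERIV ?f s :> (- 1 + s + exp (- s))"
      by (auto intro!: derivative_eq_intros)
    moreover have "- 1 + s + exp (- s) \<ge> 0"
      using exp_ge_add_one_self[of "- s"] by simp
    ultimately show "\<exists>y. DERIV ?f s :> y \<and> 0 \<le> y" by blast
  qed
  then show ?thesis by simp
qed

lemma expectation_binomial_pmf_exp: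
  assumes p: "p \<in> {0..1}"
  shows "measure_pmf.expectation (binomial_pmf M p) (\<lambda>k. exp (- t * real k))
           = (p * exp (- t) + (1 - p)) ^ M"
proof -
  have "measure_pmf.expectation (binomial_pmf M p) (\<lambda>k. exp (- t * real k))
      = (\<Sum>k\<le>M. (real (M choose k) * p ^ k * (1 - p) ^ (M - k)) *\<^sub>R exp (- t) ^ k)"
    unfolding exp_of_nat_mult[symmetric] mult.commute[of _ "real _"]
    by (rule expectation_binomial_pmf'[OF p])
  also have "\<dots> = (\<Sum>k\<le>M. real (M choose k) * (p * exp (- t)) ^ k * (1 - p) ^ (M - k))"
    by (intro sum.cong refl) (simp add: power_mult_distrib mult_ac)
  also have "\<dots> = (p * exp (- t) + (1 - p)) ^ M"
    by (rule binomial_ring[symmetric])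
  finally show ?thesis .
qed

lemma prob_binomial_pmf_less_le_exp_moment:
  assumes p: "p \<in> {0..1}" and t: "t \<ge> 0"
  shows "measure_pmf.prob (binomial_pmf M p) {k. real k < a}
           \<le> exp (t * a) * (p * exp (- t) + (1 - p)) ^ M"
proof -
  have "measure_pmf.prob (binomial_pmf M p) {k. real k < a}
      = measure_pmf.expectation (binomial_pmf M p) (indicator {k. real k < a})"
    by simp
  also have "\<dots> \<le> measure_pmf.expectation (binomial_pmf M p) (\<lambda>k. exp (t * a) * exp (- t * real k))"
  proof (rule integral_mono)
    fix k :: nat
    have "exp (t * a) * exp (- t * real k) = exp (t * (a - real k))"
      by (simp add: exp_add[symmetric] algebra_simps)
    then show "indicator {k. real k < a} k \<le> exp (t * a) * exp (- t * real k)"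
      using t by (auto simp: indicator_def)
  qed (use p in \<open>auto intro: integrable_binomial_pmf\<close>)
  also have "\<dots> = exp (t * a) * (p * exp (- t) + (1 - p)) ^ M"
    using expectation_binomial_pmf_exp[OF p] by simp
  finally show ?thesis .
qed

lemma binomial_pmf_lower_tail:
  assumes p: "0 < p" "p \<le> 1" and d: "0 < d"
  shows "measure_pmf.prob (binomial_pmf M p) {k. real k < (p - d) * real M}
           \<le> exp (- (d\<^sup>2 * real M / (2 * p)))"
proof -
  define t where "t = d / p"
  have t: "t > 0" using p d by (simp add: t_def)
  have base: "p * exp (- t) + (1 - p) \<le> exp (- p * (1 - exp (- t)))"
    using exp_ge_add_one_self[of "- p * (1 - exp (- t))"] by (simp add: algebra_simps)
  have "measure_pmf.prob (binomial_pmf M p) {k. real k < (p - d) * real M}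
      \<le> exp (t * ((p - d) * real M)) * (p * exp (- t) + (1 - p)) ^ M"
    using p t by (intro prob_binomial_pmf_less_le_exp_moment) auto
  also have "\<dots> \<le> exp (t * ((p - d) * real M)) * exp (- p * (1 - exp (- t))) ^ M"
    using p base by (intro mult_left_mono power_mono) auto
  also have "\<dots> = exp (t * ((p - d) * real M) - p * real M * (1 - exp (- t)))"
    by (simp add: exp_of_nat_mult[symmetric] exp_add[symmetric] algebra_simps)
  also have "\<dots> \<le> exp (t * ((p - d) * real M) - p * real M * (t - t\<^sup>2 / 2))"
    using exp_minus_le_quadratic[of t] t p by (intro exp_mono diff_left_mono mult_left_mono) auto
  also have "t * ((p - d) * real M) - p * real M * (t - t\<^sup>2 / 2) = - (d\<^sup>2 * real M / (2 * p))"
    using p by (simp add: t_def field_simps power2_eq_square)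
  finally show ?thesis .
qed

lemma bool_pmf_eq_bernoulli_pmf: "(q :: bool pmf) = bernoulli_pmf (pmf q True)"
proof (rule pmf_eqI)
  fix b :: bool
  show "pmf q b = pmf (bernoulli_pmf (pmf q True)) b"
    by (cases b) (simp_all add: pmf_False_conv_True pmf_le_1)
qed

lemma card_mem_Pi_pmf_binomial:
  fixes S :: "'a set pmf" and u :: 'a
  defines "p \<equiv> pmf (map_pmf (\<lambda>A. u \<in> A) S) True"
  shows "map_pmf (\<lambda>R. card {i \<in> {..<M}. u \<in> R i}) (Pi_pmf {..<M} {} (\<lambda>_. S)) = binomial_pmf M p"
proof -
  have "binomial_pmf M p
      = map_pmf (\<lambda>f. card {i \<in> {..<M}. f i}) (Pi_pmf {..<M} False (\<lambda>_. bernoulli_pmf p))"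
    by (rule binomial_pmf_altdef') (auto simp: p_def pmf_le_1)
  also have "bernoulli_pmf p = map_pmf (\<lambda>A. u \<in> A) S"
    unfolding p_def by (rule bool_pmf_eq_bernoulli_pmf[symmetric])
  also have "Pi_pmf {..<M} False (\<lambda>_. map_pmf (\<lambda>A. u \<in> A) S)
      = map_pmf (\<lambda>R. (\<lambda>A. u \<in> A) \<circ> R) (Pi_pmf {..<M} {} (\<lambda>_. S))"
    by (rule Pi_pmf_map) auto
  finally show ?thesis by (simp add: pmf.map_comp o_def)
qed

lemma prob_frac_cov_less:
  fixes S :: "'a set pmf" and u :: 'a
  defines "p \<equiv> pmf (map_pmf (\<lambda>A. u \<in> A) S) True"
  assumes "0 \<le> c" "c < p"
  shows "measure_pmf.prob (Pi_pmf {..<M} {} (\<lambda>_. S)) {R. frac_cov M R u < c}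
           \<le> exp (- ((p - c)\<^sup>2 * real M / (2 * p)))"
proof (cases "M = 0")
  case True
  then show ?thesis by simp
next
  case False
  let ?count = "\<lambda>R. card {i \<in> {..<M}. u \<in> R i}"
  have "{R. frac_cov M R u < c} = ?count -` {k. real k < (p - (p - c)) * real M}"
    using False by (auto simp: frac_cov_def field_simps)
  then have "measure_pmf.prob (Pi_pmf {..<M} {} (\<lambda>_. S)) {R. frac_cov M R u < c}
      = measure_pmf.prob (binomial_pmf M p) {k. real k < (p - (p - c)) * real M}"
    by (simp add: card_mem_Pi_pmf_binomial[where u=u and S=S and M=M, folded p_def, symmetric])
  also have "\<dots> \<le> exp (- ((p - c)\<^sup>2 * real M / (2 * p)))"
    using assms(2,3) pmf_le_1[of _ True] unfolding p_def
    by (intro binomial_pmf_lower_tail) auto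
  finally show ?thesis .
qed

lemma pmf_mem_rr_set:
  assumes "finite V" "V \<noteq> {}" "u \<in> V"
  shows "pmf (map_pmf (\<lambda>A. u \<in> A) (rr_set V G)) True = influence V G u / real (card V)"
proof -
  let ?reach = "\<lambda>v. {L. (u, v) \<in> L\<^sup>*}"
  have card_reach: "real (card {v \<in> V. (u, v) \<in> L\<^sup>*}) = (\<Sum>v\<in>V. indicator (?reach v) L)" for L
    using sum.inter_filter[OF \<open>finite V\<close>, of "\<lambda>_. 1::real" "\<lambda>v. (u, v) \<in> L\<^sup>*"]
    by (simp add: indicator_def of_bool_def)
  have "influence V G u = (\<Sum>v\<in>V. measure_pmf.prob G (?reach v))"
    unfolding influence_def card_reach
    by (subst Bochner_Integration.integral_sum)
       (auto intro!: measure_pmf.integrable_const_bound[where B=1])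
  moreover have "map_pmf (\<lambda>A. u \<in> A) (rr_set V G)
      = bind_pmf (pmf_of_set V) (\<lambda>v. map_pmf (\<lambda>L. (u, v) \<in> L\<^sup>*) G)"
    unfolding rr_set_def map_bind_pmf using assms(3) by (simp add: pmf.map_comp o_def)
  ultimately show ?thesis
    using assms by (simp add: pmf_bind integral_pmf_of_set pmf_map vimage_def)
qed

lemma frac_cov_le_frac_star:
  assumes "finite V" "u \<in> V"
  shows "frac_cov M R u \<le> frac_star V M R"
  unfolding frac_star_def using assms by (intro Max_ge) auto

lemma chernoff_exponent_ge:
  fixes p x \<epsilon> L :: real
  assumes "x \<le> p" "\<epsilon> < x" "0 < \<epsilon>" "0 \<le> L" "real M \<ge> 48 * x / \<epsilon>\<^sup>2 * L"
  shows "(p - (x - \<epsilon>))\<^sup>2 * real M / (2 * p) \<ge> 24 * L"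
proof -
  have p: "p > 0" using assms by linarith
  have "(p - (x - \<epsilon>))\<^sup>2 * x - p * \<epsilon>\<^sup>2 = (p - x)\<^sup>2 * x + (p - x) * \<epsilon> * (2 * x - \<epsilon>)"
    by (simp add: algebra_simps power2_eq_square)
  also have "\<dots> \<ge> 0"
    using assms by (intro add_nonneg_nonneg mult_nonneg_nonneg) auto
  finally have key: "(p - (x - \<epsilon>))\<^sup>2 * x / (p * \<epsilon>\<^sup>2) \<ge> 1"
    using p assms(3) by simp
  have "24 * L \<le> 24 * L * ((p - (x - \<epsilon>))\<^sup>2 * x / (p * \<epsilon>\<^sup>2))"
    using mult_left_mono[OF key, of "24 * L"] assms(4) by simp
  also have "\<dots> = (p - (x - \<epsilon>))\<^sup>2 * (48 * x / \<epsilon>\<^sup>2 * L) / (2 * p)"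
    using p assms(3) by (simp add: field_simps)
  also have "\<dots> \<le> (p - (x - \<epsilon>))\<^sup>2 * real M / (2 * p)"
    using assms(5) p by (intro divide_right_mono mult_left_mono) auto
  finally show ?thesis .
qed

lemma exists_node_mem_rr_set_prob_ge:
  assumes "finite V" "V \<noteq> {}" "I_max V G \<ge> x * real (card V)"
  obtains u where "u \<in> V" "x \<le> pmf (map_pmf (\<lambda>A. u \<in> A) (rr_set V G)) True"
proof -
  obtain u where u: "u \<in> V" "influence V G u = I_max V G"
    using Max_in[of "influence V G ` V"] assms(1,2) unfolding I_max_def
    by (metis finite_imageI imageE image_is_empty)
  have "card V > 0" using assms(1,2) by (simp add: card_gt_0_iff)
  then have "x \<le> I_max V G / real (card V)"
    using assms(3) by (simp add: pos_le_divide_eq)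
  then show ?thesis
    using that u pmf_mem_rr_set[OF assms(1,2) u(1)] by simp
qed

lemma prob_frac_star_less:
  assumes "finite V" "u \<in> V" "x \<le> pmf (map_pmf (\<lambda>A. u \<in> A) (rr_set V G)) True"
    and "0 < \<epsilon>" "0 \<le> L" "real M \<ge> 48 * x / \<epsilon>\<^sup>2 * L"
  shows "measure_pmf.prob (rr_collection V G M) {R. frac_star V M R < x - \<epsilon>} \<le> exp (- (24 * L))"
proof (cases "x \<le> \<epsilon>")
  case True
  have "x - \<epsilon> \<le> frac_cov M R u" for R
    using True by (simp add: frac_cov_def order_trans[OF _ divide_nonneg_nonneg])
  then have "x - \<epsilon> \<le> frac_star V M R" for R
    using frac_cov_le_frac_star[OF assms(1,2)] order_trans by blast
  then have "{R. frac_star V M R < x - \<epsilon>} = {}"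
    by (auto simp: not_less)
  then show ?thesis by simp
next
  case False
  let ?p = "pmf (map_pmf (\<lambda>A. u \<in> A) (rr_set V G)) True"
  let ?P = "measure_pmf.prob (rr_collection V G M)"
  have "?P {R. frac_star V M R < x - \<epsilon>} \<le> ?P {R. frac_cov M R u < x - \<epsilon>}"
    using frac_cov_le_frac_star[OF assms(1,2)]
    by (intro measure_pmf.finite_measure_mono) (auto intro: le_less_trans)
  also have "\<dots> \<le> exp (- ((?p - (x - \<epsilon>))\<^sup>2 * real M / (2 * ?p)))"
    unfolding rr_collection_def using False assms(3,4) by (intro prob_frac_cov_less) auto
  also have "\<dots> \<le> exp (- (24 * L))"
    using False assms(3-6) by (simp add: chernoff_exponent_ge)
  finally show ?thesis .
qed

theorem lemma6p4:
  fixes V :: "'v set" and E :: "('v \<times> 'v) set" and w :: "'v \<Rightarrow> 'v \<Rightarrow> real"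
    and ws :: "'v \<Rightarrow> real" and G :: "('v \<times> 'v) set pmf"
    and \<epsilon> \<delta> x :: real and M :: nat
  assumes model: "live_edge_model V E w ws G"
    and eps: "\<epsilon> > 0" and delta: "0 < \<delta>" "\<delta> < 1" and xpos: "x > 0"
    and M_def: "M = nat \<lceil>48 * x / \<epsilon>\<^sup>2 * ln (2 * real (card V) / \<delta>)\<rceil>"
    and Imax: "I_max V G \<ge> x * real (card V)"
  shows "measure_pmf.prob (rr_collection V G M) {R. frac_star V M R \<ge> x - \<epsilon>}
           \<ge> 1 - (\<delta> / (2 * real (card V))) ^ 24"
proof -
  have fin: "finite V" and ne: "V \<noteq> {}" using model unfolding live_edge_model_def by auto
  define n where "n = real (card V)"
  define L where "L = ln (2 * n / \<delta>)"
  have n: "n \<ge> 1" unfolding n_def using fin ne by (simp add: Suc_leI card_gt_0_iff)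
  obtain u where u: "u \<in> V" "x \<le> pmf (map_pmf (\<lambda>A. u \<in> A) (rr_set V G)) True"
    using exists_node_mem_rr_set_prob_ge[OF fin ne Imax] .
  have "real M \<ge> 48 * x / \<epsilon>\<^sup>2 * L"
    unfolding M_def L_def n_def by (rule real_nat_ceiling_ge)
  then have "measure_pmf.prob (rr_collection V G M) {R. frac_star V M R < x - \<epsilon>} \<le> exp (- (24 * L))"
    using n delta by (intro prob_frac_star_less[OF fin u eps]) (simp_all add: L_def)
  also have "exp (- (24 * L)) = exp (- L) ^ 24"
    by (metis exp_of_nat_mult mult_minus_right of_nat_numeral)
  also have "exp (- L) = \<delta> / (2 * n)"
    using n delta by (simp add: L_def exp_minus)
  finally have "measure_pmf.prob (rr_collection V G M) {R. frac_star V M R < x - \<epsilon>}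
      \<le> (\<delta> / (2 * n)) ^ 24" .
  moreover have "{R. frac_star V M R \<ge> x - \<epsilon>} = UNIV - {R. frac_star V M R < x - \<epsilon>}"
    by auto
  ultimately show ?thesis
    using measure_pmf.prob_compl[of "{R. frac_star V M R < x - \<epsilon>}" "rr_collection V G M"]
    by (simp add: n_def)
qed

end
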